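(* Let $P\in\mathcal X$ be positive definite and let $Z_n$, $n=1,2,\dots$, be a sequence of traceless Hermitian matrices in $\mathbb H^d$ such that $F(P,Z_n)$ is constant in $n$. Then the eigenvalues $\{z_{k,n}\}_{k=1,\dots,d}$ of $Z_n$ are uniformly bounded: $\sup_{k,n}|z_{k,n}|<\infty$.
   Context: Single player: $d\ge1$, $\mathbb H^d$ is the real vector space of $d\times d$ complex Hermitian matrices; $\mathcal X=\{X\in\mathbb H^d:X\succeq0,\operatorname{tr}X=1\}$. For Hermitian $A=\sum_k\lambda_kv_kv_k^\dagger$, $f(A)=\sum_kf(\lambda_k)v_kv_k^\dagger$. Regularizer $h(X)=\operatorname{tr}\theta(X)$ with $\theta:[0,1]\to\mathbb R$ continuous, twice differentiable on $(0,1]$, $\theta(0)=0$, $\inf_{(0,1]}\theta''>0$. Mirror map $Q(Y)=\arg\max_{X\in\mathcal X}\{\operatorname{tr}(YX)-h(X)\}$. Convex conjugate $h^*(Y)=\max_{X\in\mathcal X}\{\operatorname{tr}(YX)-h(X)\}$. Fenchel coupling $F(P,Y)=h(P)+h^*(Y)-\operatorname{tr}(PY)$ for $P\in\mathcal X$, $Y\in\mathbb H^d$. *)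

theory Defs
  imports "HOL-Analysis.Analysis"
begin

text \<open>d x d complex matrices are represented as complex^'n^'n with 'n a finite type,
  d = CARD('n) (so d \<ge> 1 automatically).\<close>

type_synonym 'n cmat = "complex^'n^'n"

definition ctrace :: "'n::finite cmat \<Rightarrow> complex" where
  "ctrace A = (\<Sum>i\<in>UNIV. A $ i $ i)"

definition cadj :: "'n::finite cmat \<Rightarrow> 'n cmat" where
  "cadj A = (\<chi> i j. cnj (A $ j $ i))"

definition hermitian :: "'n::finite cmat \<Rightarrow> bool" where
  "hermitian A \<longleftrightarrow> cadj A = A"

definition unitary :: "'n::finite cmat \<Rightarrow> bool" where
  "unitary U \<longleftrightarrow> U ** cadj U = mat 1 \<and> cadj U ** U = mat 1"

definition rdiag :: "('n::finite \<Rightarrow> real) \<Rightarrow> 'n cmat" where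
  "rdiag l = (\<chi> i j. if i = j then complex_of_real (l i) else 0)"

definition cquad :: "'n::finite cmat \<Rightarrow> complex^'n \<Rightarrow> complex" where
  "cquad A x = (\<Sum>i\<in>UNIV. \<Sum>j\<in>UNIV. cnj (x $ i) * A $ i $ j * x $ j)"

definition psd :: "'n::finite cmat \<Rightarrow> bool" where
  "psd A \<longleftrightarrow> hermitian A \<and> (\<forall>x. 0 \<le> Re (cquad A x))"

definition pos_def :: "'n::finite cmat \<Rightarrow> bool" where
  "pos_def A \<longleftrightarrow> hermitian A \<and> (\<forall>x. x \<noteq> 0 \<longrightarrow> 0 < Re (cquad A x))"

text \<open>Matrix function f(A) = \<Sum>_k f(\<lambda>_k) v_k v_k^\<dagger> via a unitary diagonalisation
  A = U diag(\<lambda>) U^\<dagger> (independent of the chosen diagonalisation).\<close>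
definition matfun :: "(real \<Rightarrow> real) \<Rightarrow> 'n::finite cmat \<Rightarrow> 'n cmat" where
  "matfun f A = (SOME B. \<exists>U l. unitary U \<and> A = U ** rdiag l ** cadj U
                          \<and> B = U ** rdiag (f \<circ> l) ** cadj U)"

definition spectraplex :: "'n::finite cmat set" where
  "spectraplex = {X. psd X \<and> ctrace X = 1}"

text \<open>Regularizer h(X) = tr \<theta>(X) (real since \<theta>(X) is Hermitian).\<close>
definition hreg :: "(real \<Rightarrow> real) \<Rightarrow> 'n::finite cmat \<Rightarrow> real" where
  "hreg \<theta> X = Re (ctrace (matfun \<theta> X))"

text \<open>Convex conjugate h*(Y) = max_{X\<in>\<X>} {tr(YX) - h(X)} (the max exists; written as SUP).\<close>
definition hconj :: "(real \<Rightarrow> real) \<Rightarrow> 'n::finite cmat \<Rightarrow> real" where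
  "hconj \<theta> Y = (SUP X\<in>spectraplex. Re (ctrace (Y ** X)) - hreg \<theta> X)"

definition fenchel :: "(real \<Rightarrow> real) \<Rightarrow> 'n::finite cmat \<Rightarrow> 'n cmat \<Rightarrow> real" where
  "fenchel \<theta> P Y = hreg \<theta> P + hconj \<theta> Y - Re (ctrace (P ** Y))"

definition admissible_theta :: "(real \<Rightarrow> real) \<Rightarrow> bool" where
  "admissible_theta \<theta> \<longleftrightarrow>
     continuous_on {0..1} \<theta> \<and> \<theta> 0 = 0 \<and>
     (\<exists>\<theta>' \<theta>''. (\<forall>x\<in>{0<..1}. (\<theta> has_real_derivative \<theta>' x) (at x within {0<..1})
                            \<and> (\<theta>' has_real_derivative \<theta>'' x) (at x within {0<..1}))
              \<and> (INF x\<in>{0<..1}. \<theta>'' x) > 0)"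

end

theory Submission
  imports Defs
begin

text \<open>Write \<open>Z = W diag(z) W\<^sup>\<dagger>\<close> with orthonormal eigenvectors \<open>w\<^sub>k\<close> and let \<open>z\<^sub>j\<close> be the
  largest eigenvalue. Testing \<open>h\<^sup>*(Z)\<close> with the rank one state \<open>w\<^sub>j w\<^sub>j\<^sup>\<dagger>\<close> gives
  \<open>h\<^sup>*(Z) \<ge> z\<^sub>j - d max |\<theta>|\<close>, while \<open>tr(PZ) = \<Sum>\<^sub>k z\<^sub>k p\<^sub>k\<close> with weights \<open>p\<^sub>k = w\<^sub>k\<^sup>\<dagger> P w\<^sub>k\<close>
  summing to one and bounded below by the minimum \<open>c > 0\<close> of \<open>x\<^sup>\<dagger> P x\<close> on the unit sphere. Since \<open>Z\<close> is traceless,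
  \<open>z\<^sub>j - tr(PZ) = \<Sum>\<^sub>k (z\<^sub>j - z\<^sub>k) p\<^sub>k \<ge> c \<Sum>\<^sub>k (z\<^sub>j - z\<^sub>k) = c d z\<^sub>j\<close>, so a constant Fenchel coupling
  bounds \<open>z\<^sub>j\<close> from above; tracelessness then bounds every eigenvalue from below as well.\<close>

definition cinner :: "complex^'n::finite \<Rightarrow> complex^'n \<Rightarrow> complex" where
  "cinner x y = (\<Sum>i\<in>UNIV. cnj (x $ i) * y $ i)"

lemma cinner_add_right: "cinner x (y + z) = cinner x y + cinner x z"
  by (simp add: cinner_def distrib_left sum.distrib)

lemma cinner_add_left: "cinner (x + y) z = cinner x z + cinner y z"
  by (simp add: cinner_def distrib_right sum.distrib)

lemma cinner_diff_right: "cinner x (y - z) = cinner x y - cinner x z"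
  by (simp add: cinner_def right_diff_distrib sum_subtractf)

lemma cinner_scale_right: "cinner x (c *s y) = c * cinner x y"
  by (simp add: cinner_def sum_distrib_left ac_simps)

lemma cinner_scale_left: "cinner (c *s x) y = cnj c * cinner x y"
  by (simp add: cinner_def sum_distrib_left ac_simps)

lemma cinner_zero_right [simp]: "cinner x 0 = 0"
  by (simp add: cinner_def)

lemma cnj_cinner: "cnj (cinner x y) = cinner y x"
  by (simp add: cinner_def ac_simps)

lemma Re_cinner: "Re (cinner x y) = inner x y"
  by (simp add: cinner_def inner_vec_def inner_complex_def Re_sum algebra_simps)

lemma Im_cinner: "Im (cinner x y) = inner y (\<i> *s x)"
  by (simp add: cinner_def inner_vec_def inner_complex_def Im_sum algebra_simps)

lemma cinner_self: "cinner x x = of_real (norm x ^ 2)"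
proof -
  have "Im (cinner x x) = 0" by (simp add: cinner_def Im_sum)
  moreover have "Re (cinner x x) = norm x ^ 2" by (simp add: Re_cinner power2_norm_eq_inner)
  ultimately show ?thesis by (simp add: complex_eq_iff)
qed

lemma cinner_self_eq_1_iff: "cinner x x = 1 \<longleftrightarrow> norm x = 1"
proof -
  have "cinner x x = 1 \<longleftrightarrow> norm x ^ 2 = 1"
    unfolding cinner_self of_real_eq_1_iff ..
  then show ?thesis by (smt (verit) norm_ge_zero power2_eq_1_iff)
qed

lemma cquad_eq_cinner: "cquad A x = cinner x (A *v x)"
  by (simp add: cquad_def cinner_def matrix_vector_mult_def sum_distrib_left ac_simps)

lemma Re_cquad: "Re (cquad A x) = inner x (A *v x)"
  by (simp add: cquad_eq_cinner Re_cinner)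

lemma cinner_mult_right: "cinner x (A *v y) = cinner (cadj A *v x) y"
proof -
  have "cinner x (A *v y) = (\<Sum>i\<in>UNIV. \<Sum>j\<in>UNIV. cnj (x$i) * A$i$j * y$j)"
    by (simp add: cinner_def matrix_vector_mult_def sum_distrib_left mult.assoc)
  also have "\<dots> = (\<Sum>j\<in>UNIV. \<Sum>i\<in>UNIV. cnj (x$i) * A$i$j * y$j)"
    by (rule sum.swap)
  also have "\<dots> = cinner (cadj A *v x) y"
    by (simp add: cinner_def matrix_vector_mult_def cadj_def cnj_sum sum_distrib_left ac_simps)
  finally show ?thesis .
qed

lemma hermitian_cinner_mult: "hermitian H \<Longrightarrow> cinner x (H *v y) = cinner (H *v x) y"
  by (metis cinner_mult_right hermitian_def)

lemma hermitian_cinner_self_real: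
  "hermitian H \<Longrightarrow> cinner x (H *v x) = of_real (Re (cinner x (H *v x)))"
  by (metis Reals_cnj_iff cnj_cinner hermitian_cinner_mult of_real_Re)

lemma cinner_quad_add_scaled:
  "cinner (x + c *s r) (H *v (x + c *s r)) = cinner x (H *v x) + c * cinner x (H *v r)
     + cnj c * cinner r (H *v x) + cnj c * c * cinner r (H *v r)"
  by (simp add: matrix_vector_right_distrib vector_scalar_commute cinner_add_left cinner_add_right
      cinner_scale_left cinner_scale_right algebra_simps)

lemma scaleR_eq_of_real_scale: "(c::real) *\<^sub>R (x::complex^'n) = of_real c *s x"
  by (simp add: vec_eq_iff scaleR_conv_of_real[where 'a=complex])

lemma matrix_vector_mult_scaleR: "(H::complex^'n^'m) *v (c *\<^sub>R x) = c *\<^sub>R (H *v x)"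
  by (simp add: scaleR_eq_of_real_scale vector_scalar_commute)

subsection \<open>The spectral theorem for Hermitian matrices\<close>

lemma real_quadratic_ge_linear_imp_nonpos:
  fixes N a :: real
  assumes "\<And>t. 2 * t * N \<le> t * t * a"
  shows "N \<le> 0"
proof (rule ccontr)
  assume "\<not> N \<le> 0"
  then have N: "N > 0" by simp
  define t where "t = N / (\<bar>a\<bar> + 1)"
  have t: "t > 0" using N by (simp add: t_def)
  have "t * (2 * N) \<le> t * (t * a)" using assms[of t] by (simp add: algebra_simps)
  then have "2 * N \<le> t * a" using t by (simp add: mult_le_cancel_left_pos)
  also have "\<dots> \<le> t * \<bar>a\<bar>" using t by (simp add: mult_left_mono)
  also have "\<dots> < N" using N by (simp add: t_def divide_less_eq)
  finally show False using N by simp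
qed

lemma quadratic_form_attains_max_on_subspace:
  fixes H :: "complex^'n::finite^'n"
  assumes S: "subspace S" and "x0 \<in> S" "x0 \<noteq> 0"
  obtains x where "x \<in> S" "norm x = 1"
    "\<And>y. y \<in> S \<Longrightarrow> inner y (H *v y) \<le> inner x (H *v x) * norm y ^ 2"
proof -
  define K where "K = S \<inter> sphere 0 1"
  have "compact K"
    unfolding K_def by (simp add: closed_Int_compact closed_subspace S)
  moreover have "(1 / norm x0) *\<^sub>R x0 \<in> K"
    using assms by (simp add: K_def subspace_scale)
  moreover have "continuous_on K (\<lambda>x. inner x (H *v x))"
    by (intro continuous_on_inner continuous_on_id matrix_vector_mult_linear_continuous_on)
  ultimately obtain x where x: "x \<in> K"
    and max: "\<And>y. y \<in> K \<Longrightarrow> inner y (H *v y) \<le> inner x (H *v x)"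
    using continuous_attains_sup by (metis empty_iff)
  have "inner y (H *v y) \<le> inner x (H *v x) * norm y ^ 2" if "y \<in> S" for y
  proof (cases "y = 0")
    case False
    define a where "a = 1 / norm y"
    have "a *\<^sub>R y \<in> K" using False that by (simp add: K_def a_def subspace_scale S)
    then have "a * a * inner y (H *v y) \<le> inner x (H *v x)"
      using max[of "a *\<^sub>R y"] by (simp add: matrix_vector_mult_scaleR)
    then show ?thesis
      using False by (simp add: a_def field_simps power2_eq_square)
  qed simp
  with x that show thesis by (auto simp: K_def)
qed

text \<open>First order condition at the maximiser: perturbing \<open>x\<close> in the direction of the residual
  \<open>r = Hx - \<lambda>x\<close> would increase the Rayleigh quotient unless \<open>r = 0\<close>.\<close>

lemma hermitian_maximiser_is_eigenvector:
  fixes H :: "complex^'n::finite^'n"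
  assumes h: "hermitian H" and S: "subspace S" and inv: "\<And>y. y \<in> S \<Longrightarrow> H *v y \<in> S"
    and x: "x \<in> S" "norm x = 1"
    and max: "\<And>y. y \<in> S \<Longrightarrow> inner y (H *v y) \<le> inner x (H *v x) * norm y ^ 2"
  shows "H *v x = of_real (inner x (H *v x)) *s x"
proof -
  define l where "l = inner x (H *v x)"
  define r where "r = H *v x - of_real l *s x"
  have xx: "cinner x x = 1" using x by (simp add: cinner_self_eq_1_iff)
  have rS: "r \<in> S"
    unfolding r_def using x inv S by (simp add: subspace_diff subspace_scale scaleR_eq_of_real_scale[symmetric])
  have qx: "cinner x (H *v x) = of_real l"
    using hermitian_cinner_self_real[OF h, of x] by (simp add: l_def Re_cinner)
  have xr: "cinner x r = 0" by (simp add: r_def cinner_diff_right cinner_scale_right qx xx)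
  then have rx: "cinner r x = 0" by (metis cnj_cinner complex_cnj_zero)
  have Hx: "H *v x = r + of_real l *s x" by (simp add: r_def)
  have xHr: "cinner x (H *v r) = cinner r r"
    using hermitian_cinner_mult[OF h, of x r] by (simp add: Hx cinner_add_left cinner_scale_left xr)
  have rHx: "cinner r (H *v x) = cinner r r"
    by (simp add: Hx cinner_add_right cinner_scale_right rx)
  define N where "N = Re (cinner r r)"
  define Q where "Q = Re (cinner r (H *v r))"
  have "2 * t * N \<le> t * t * (l * N - Q)" for t :: real
  proof -
    define y where "y = x + of_real t *s r"
    have "y \<in> S"
      using x rS S by (simp add: y_def subspace_add subspace_scale scaleR_eq_of_real_scale[symmetric])
    moreover have "inner y (H *v y) = l + 2 * t * N + t * t * Q"
      unfolding Re_cinner[symmetric] y_def cinner_quad_add_scaled by (simp add: qx xHr rHx N_def Q_def)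
    moreover have "norm y ^ 2 = 1 + t * t * N"
      unfolding power2_norm_eq_inner Re_cinner[symmetric] y_def
      by (simp add: cinner_add_left cinner_add_right cinner_scale_left cinner_scale_right xx xr rx N_def)
    ultimately have "l + 2 * t * N + t * t * Q \<le> l * (1 + t * t * N)"
      using max l_def by metis
    then show ?thesis by (simp add: algebra_simps)
  qed
  then have "N \<le> 0" by (rule real_quadratic_ge_linear_imp_nonpos)
  then have "r = 0" by (metis N_def Re_cinner inner_gt_zero_iff not_le)
  then show ?thesis by (simp add: r_def l_def)
qed

lemma rdiag_mult_entry: "(A ** rdiag l) $ i $ k = A $ i $ k * of_real (l k)"
  unfolding matrix_matrix_mult_def rdiag_def by (simp add: if_distrib cong: if_cong)

text \<open>Complex orthogonality to \<open>v\<close> is real orthogonality to both \<open>v\<close> and \<open>i v\<close>, so it suffices to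
  avoid a real span of dimension at most \<open>2k < 2d\<close>.\<close>

lemma exists_nonzero_cinner_orthogonal:
  fixes v :: "nat \<Rightarrow> complex^'n::finite"
  assumes "k < CARD('n)"
  obtains x where "x \<noteq> 0" "\<And>i. i < k \<Longrightarrow> cinner (v i) x = 0"
proof -
  define T where "T = v ` {..<k} \<union> (\<lambda>i. \<i> *s v i) ` {..<k}"
  have "finite T" by (simp add: T_def)
  have "card T \<le> k + k" unfolding T_def
    by (metis card_Un_le card_image_le card_lessThan finite_lessThan add_mono order_trans)
  then have "dim T < DIM(complex^'n)" using assms dim_le_card'[OF \<open>finite T\<close>] by simp
  then obtain x where x0: "x \<noteq> 0" and xo: "\<And>y. y \<in> span T \<Longrightarrow> orthogonal x y"
    using orthogonal_to_subspace_exists by blast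
  have "cinner (v i) x = 0" if "i < k" for i
  proof -
    have "orthogonal x (v i)" "orthogonal x (\<i> *s v i)"
      using xo that by (auto simp: T_def intro: span_base)
    then have "Re (cinner (v i) x) = 0" "Im (cinner (v i) x) = 0"
      by (simp_all add: Re_cinner Im_cinner orthogonal_def inner_commute)
    then show ?thesis by (simp add: complex_eq_iff)
  qed
  with x0 that show thesis by blast
qed

lemma hermitian_orthonormal_eigenvectors:
  fixes H :: "complex^'n::finite^'n"
  assumes h: "hermitian H"
  shows "k \<le> CARD('n) \<Longrightarrow> \<exists>v::nat\<Rightarrow>complex^'n. \<exists>l::nat\<Rightarrow>real.
          (\<forall>i<k. \<forall>j<k. cinner (v i) (v j) = (if i = j then 1 else 0)) \<and> (\<forall>i<k. H *v v i = of_real (l i) *s v i)"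
proof (induction k)
  case 0 then show ?case by auto
next
  case (Suc k)
  then obtain v l where on: "\<forall>i<k. \<forall>j<k. cinner (v i) (v j) = (if i = j then 1 else 0)"
      and ev: "\<forall>i<k. H *v v i = of_real (l i) *s v i" by auto
  define S where "S = {x. \<forall>i<k. cinner (v i) x = 0}"
  have sub: "subspace S" unfolding subspace_def S_def
    by (simp add: cinner_add_right scaleR_eq_of_real_scale cinner_scale_right)
  have inv: "H *v x \<in> S" if "x \<in> S" for x
  proof -
    have "cinner (v i) (H *v x) = 0" if "i < k" for i
    proof -
      have "cinner (v i) (H *v x) = cinner (H *v v i) x" using hermitian_cinner_mult[OF h] by blast
      also have "\<dots> = of_real (l i) * cinner (v i) x" using ev that by (simp add: cinner_scale_left)
      finally show ?thesis using \<open>x \<in> S\<close> that by (simp add: S_def)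
    qed
    then show ?thesis by (simp add: S_def)
  qed
  obtain x where x0: "x \<noteq> 0" and "\<And>i. i < k \<Longrightarrow> cinner (v i) x = 0"
    using exists_nonzero_cinner_orthogonal Suc.prems by (metis Suc_le_lessD)
  then have xS: "x \<in> S" by (simp add: S_def)
  obtain w where wS: "w \<in> S" and "norm w = 1"
    and "\<And>y. y \<in> S \<Longrightarrow> inner y (H *v y) \<le> inner w (H *v w) * norm y ^ 2"
    using quadratic_form_attains_max_on_subspace[OF sub xS x0] by blast
  then have ww: "cinner w w = 1" and wev: "H *v w = of_real (inner w (H *v w)) *s w"
    using hermitian_maximiser_is_eigenvector[OF h sub inv wS] by (auto simp: cinner_self_eq_1_iff)
  have wv: "cinner w (v i) = 0" if "i < k" for i
    using wS that cnj_cinner[of "v i" w] by (simp add: S_def)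
  have vw: "cinner (v i) w = 0" if "i < k" for i
    using wS that by (simp add: S_def)
  show ?case
    using on ev wv vw ww wev
    by (intro exI[of _ "v(k := w)"] exI[of _ "l(k := inner w (H *v w))"]) (auto simp: less_Suc_eq)
qed

lemma finite_enumeration:
  obtains g :: "'n::finite \<Rightarrow> nat" where "inj g" "\<And>j. g j < CARD('n)"
proof -
  obtain g :: "'n \<Rightarrow> nat" where "bij_betw g UNIV {0..<CARD('n)}"
    using ex_bij_betw_finite_nat[of "UNIV :: 'n set"] by auto
  then have "inj g" "g j < CARD('n)" for j by (auto simp: bij_betw_def)
  with that show thesis by blast
qed

lemma hermitian_unitary_diagonalization:
  fixes H :: "complex^'n::finite^'n"
  assumes h: "hermitian H"
  shows "\<exists>U l. unitary U \<and> H = U ** rdiag l ** cadj U"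
proof -
  obtain v l where on: "\<forall>i<CARD('n). \<forall>j<CARD('n). cinner (v i) (v j) = (if i = j then 1 else 0)"
      and ev: "\<forall>i<CARD('n). H *v v i = of_real (l i) *s v i"
    using hermitian_orthonormal_eigenvectors[OF h, of "CARD('n)"] by auto
  obtain g :: "'n \<Rightarrow> nat" where ginj: "inj g" and gl: "\<And>j. g j < CARD('n)"
    using finite_enumeration by metis
  define U :: "complex^'n^'n" where "U = (\<chi> i j. v (g j) $ i)"
  define l' where "l' = (\<lambda>j. l (g j))"
  have "cadj U ** U = mat 1"
  proof -
    have "(cadj U ** U) $ j $ k = (if j = k then 1 else 0)" for j k
    proof -
      have "(cadj U ** U) $ j $ k = cinner (v (g j)) (v (g k))"
        by (simp add: matrix_matrix_mult_def cadj_def U_def cinner_def)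
      also have "\<dots> = (if j = k then 1 else 0)" using on gl ginj by (simp add: inj_eq)
      finally show ?thesis .
    qed
    then show ?thesis by (simp add: vec_eq_iff mat_def)
  qed
  then have uni: "unitary U" unfolding unitary_def using matrix_left_right_inverse by blast
  have HU: "H ** U = U ** rdiag l'"
  proof -
    have "(H ** U) $ i $ k = (U ** rdiag l') $ i $ k" for i k
    proof -
      have "(H ** U) $ i $ k = (H *v v (g k)) $ i"
        by (simp add: matrix_matrix_mult_def matrix_vector_mult_def U_def)
      also have "\<dots> = of_real (l (g k)) * v (g k) $ i" using ev gl by simp
      finally show ?thesis by (simp add: rdiag_mult_entry U_def l'_def mult.commute)
    qed
    then show ?thesis by (simp add: vec_eq_iff)
  qed
  have "H = H ** (U ** cadj U)" using uni by (simp add: unitary_def)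
  also have "\<dots> = U ** rdiag l' ** cadj U" by (metis HU matrix_mul_assoc)
  finally show ?thesis using uni by blast
qed

subsection \<open>Unitary diagonal forms\<close>

lemma unitary_cinner_columns:
  "unitary U \<Longrightarrow> cinner (column j U) (column k U) = (if j = k then 1 else 0)"
proof -
  assume u: "unitary U"
  have "cinner (column j U) (column k U) = (cadj U ** U) $ j $ k"
    by (simp add: cinner_def matrix_matrix_mult_def column_def cadj_def)
  then show ?thesis using u by (simp add: unitary_def mat_def)
qed

lemma unitary_cadj_mult_column: "unitary U \<Longrightarrow> cadj U *v column k U = axis k 1"
proof -
  assume u: "unitary U"
  have "(cadj U *v column k U) $ j = (cadj U ** U) $ j $ k" for j
    by (simp add: matrix_vector_mult_def matrix_matrix_mult_def column_def)
  then show ?thesis using u by (simp add: unitary_def vec_eq_iff mat_def axis_def)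
qed

lemma matrix_vector_mult_axis_1: "U *v axis k 1 = column k U"
  by (simp add: vec_eq_iff matrix_vector_mult_def column_def axis_def if_distrib cong: if_cong)

lemma rdiag_mult_vector_nth: "(rdiag l *v y) $ j = of_real (l j) * y $ j"
proof -
  have "(rdiag l *v y) $ j = (\<Sum>i\<in>UNIV. (if j = i then of_real (l j) else 0) * y $ i)"
    by (simp add: matrix_vector_mult_def rdiag_def cong: if_cong)
  also have "\<dots> = (\<Sum>i\<in>UNIV. if j = i then of_real (l j) * y $ i else 0)"
    by (rule sum.cong) auto
  finally show ?thesis by simp
qed

lemma diag_conj_mult_column:
  "unitary U \<Longrightarrow> (U ** rdiag l ** cadj U) *v column k U = of_real (l k) *s column k U"
proof -
  assume u: "unitary U"
  have "rdiag l *v axis k 1 = of_real (l k) *s axis k 1"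
    by (simp add: vec_eq_iff rdiag_mult_vector_nth axis_def)
  have "(U ** rdiag l ** cadj U) *v column k U = U *v (rdiag l *v (cadj U *v column k U))"
    by (simp add: matrix_vector_mul_assoc matrix_mul_assoc)
  also have "\<dots> = of_real (l k) *s column k U"
    using u \<open>rdiag l *v axis k 1 = _\<close>
    by (simp add: unitary_cadj_mult_column vector_scalar_commute matrix_vector_mult_axis_1)
  finally show ?thesis .
qed

lemma cquad_diag_conj_column:
  "unitary U \<Longrightarrow> cquad (U ** rdiag l ** cadj U) (column k U) = of_real (l k)"
  by (simp add: cquad_eq_cinner diag_conj_mult_column cinner_scale_right unitary_cinner_columns)

lemma ctrace_mult_diag_conj:
  "ctrace (A ** (U ** rdiag l ** cadj U)) = (\<Sum>k\<in>UNIV. of_real (l k) * cquad A (column k U))"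
proof -
  have "ctrace (A ** (U ** rdiag l ** cadj U))
      = (\<Sum>i\<in>UNIV. \<Sum>j\<in>UNIV. \<Sum>k\<in>UNIV. of_real (l k) * (cnj (U $ i $ k) * A$i$j * U $ j $ k))"
    by (simp add: ctrace_def matrix_matrix_mult_def[of A] matrix_matrix_mult_def[of "U ** rdiag l"]
        rdiag_mult_entry cadj_def sum_distrib_left ac_simps)
  also have "\<dots> = (\<Sum>i\<in>UNIV. \<Sum>k\<in>UNIV. \<Sum>j\<in>UNIV. of_real (l k) * (cnj (U $ i $ k) * A$i$j * U $ j $ k))"
    by (rule sum.cong[OF refl], rule sum.swap)
  also have "\<dots> = (\<Sum>k\<in>UNIV. \<Sum>i\<in>UNIV. \<Sum>j\<in>UNIV. of_real (l k) * (cnj (U $ i $ k) * A$i$j * U $ j $ k))"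
    by (rule sum.swap)
  also have "\<dots> = (\<Sum>k\<in>UNIV. of_real (l k) * cquad A (column k U))"
    by (simp add: cquad_def column_def sum_distrib_left)
  finally show ?thesis .
qed

lemma ctrace_diag_conj: "unitary U \<Longrightarrow> ctrace (U ** rdiag l ** cadj U) = of_real (\<Sum>k\<in>UNIV. l k)"
  using ctrace_mult_diag_conj[of "mat 1" U l] by (simp add: cquad_eq_cinner unitary_cinner_columns)

lemma eigenvalue_diag_conj:
  assumes u: "unitary W" and ev: "(W ** rdiag l ** cadj W) *v v = z *s v" and "v \<noteq> 0"
  obtains j where "z = of_real (l j)"
proof -
  define y where "y = cadj W *v v"
  have "W *v y = v" using u by (simp add: y_def matrix_vector_mul_assoc unitary_def)
  then have "y \<noteq> 0" using \<open>v \<noteq> 0\<close> by auto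
  then obtain j where yj: "y $ j \<noteq> 0" by (auto simp: vec_eq_iff)
  have "cadj W ** (W ** rdiag l ** cadj W) = rdiag l ** cadj W"
    using u by (simp add: unitary_def matrix_mul_assoc)
  then have "rdiag l *v y = z *s y"
    using arg_cong[OF ev, of "\<lambda>x. cadj W *v x"]
    by (simp add: y_def matrix_vector_mul_assoc vector_scalar_commute)
  then have "of_real (l j) * y $ j = z * y $ j" by (metis rdiag_mult_vector_nth vector_smult_component)
  with yj that show thesis by auto
qed

subsection \<open>States, the regularizer and its conjugate\<close>

lemma spectraplex_diagonalization:
  assumes X: "X \<in> spectraplex"
  obtains U l where "unitary U" "X = U ** rdiag l ** cadj U" "hreg \<theta> X = (\<Sum>k\<in>UNIV. \<theta> (l k))"
    "\<And>k. 0 \<le> l k \<and> l k \<le> 1" "(\<Sum>k\<in>UNIV. l k) = 1"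
proof -
  have psd: "psd X" and tr: "ctrace X = 1" using X by (auto simp: spectraplex_def)
  then have "\<exists>B. \<exists>U l. unitary U \<and> X = U ** rdiag l ** cadj U \<and> B = U ** rdiag (\<theta> \<circ> l) ** cadj U"
    using hermitian_unitary_diagonalization by (metis psd_def)
  then have "\<exists>U l. unitary U \<and> X = U ** rdiag l ** cadj U \<and> matfun \<theta> X = U ** rdiag (\<theta> \<circ> l) ** cadj U"
    unfolding matfun_def by (rule someI_ex)
  then obtain U l where u: "unitary U" and X_eq: "X = U ** rdiag l ** cadj U"
    and f_eq: "matfun \<theta> X = U ** rdiag (\<theta> \<circ> l) ** cadj U" by blast
  have l_nonneg: "0 \<le> l k" for k
  proof -
    have "0 \<le> Re (cquad X (column k U))" using psd by (simp add: psd_def)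
    then show ?thesis by (simp add: X_eq cquad_diag_conj_column[OF u])
  qed
  have l_sum: "(\<Sum>k\<in>UNIV. l k) = 1"
    using ctrace_diag_conj[OF u, of l] X_eq tr of_real_eq_1_iff by metis
  have "l k \<le> 1" for k
    using member_le_sum[of k UNIV l] l_nonneg l_sum by simp
  moreover have "hreg \<theta> X = (\<Sum>k\<in>UNIV. \<theta> (l k))"
    by (simp add: hreg_def f_eq ctrace_diag_conj[OF u])
  ultimately show thesis using that u X_eq l_nonneg l_sum by blast
qed

definition rank1 :: "complex^'n::finite \<Rightarrow> complex^'n^'n" where
  "rank1 u = (\<chi> i j. u $ i * cnj (u $ j))"

lemma rank1_in_spectraplex: "norm u = 1 \<Longrightarrow> rank1 u \<in> spectraplex"
proof -
  assume "norm u = 1"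
  then have "ctrace (rank1 u) = 1"
    using cinner_self_eq_1_iff[of u] by (simp add: ctrace_def rank1_def cinner_def mult.commute)
  moreover have "cquad (rank1 u) x = cnj (cinner u x) * cinner u x" for x
    by (simp add: cquad_def rank1_def cinner_def cnj_sum sum_distrib_left sum_distrib_right ac_simps)
      (rule sum.swap)
  ultimately show ?thesis
    by (simp add: spectraplex_def psd_def hermitian_def cadj_def rank1_def vec_eq_iff mult.commute)
qed

lemma ctrace_mult_rank1: "ctrace (Y ** rank1 u) = cquad Y u"
  by (simp add: ctrace_def matrix_matrix_mult_def rank1_def cquad_def sum_distrib_left ac_simps)

lemma admissible_theta_bounded:
  assumes "admissible_theta \<theta>"
  obtains M where "\<And>x. x \<in> {0..1} \<Longrightarrow> \<bar>\<theta> x\<bar> \<le> M"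
proof -
  have "compact (\<theta> ` {0..1})"
    using assms by (intro compact_continuous_image) (auto simp: admissible_theta_def)
  then obtain M where "\<And>y. y \<in> \<theta> ` {0..1} \<Longrightarrow> norm y \<le> M"
    by (meson bounded_iff compact_imp_bounded)
  with that show thesis by (metis image_eqI real_norm_def)
qed

lemma abs_hreg_le:
  fixes X :: "complex^'n::finite^'n"
  assumes "X \<in> spectraplex" and M: "\<And>x. x \<in> {0..1} \<Longrightarrow> \<bar>\<theta> x\<bar> \<le> M"
  shows "\<bar>hreg \<theta> X\<bar> \<le> real CARD('n) * M"
proof -
  obtain U :: "complex^'n^'n" and l :: "'n \<Rightarrow> real" where hr: "hreg \<theta> X = (\<Sum>k\<in>UNIV. \<theta> (l k))"
    and l: "\<And>k. 0 \<le> l k \<and> l k \<le> 1"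
    using spectraplex_diagonalization[OF assms(1)] by metis
  have "\<bar>hreg \<theta> X\<bar> \<le> (\<Sum>k\<in>UNIV. \<bar>\<theta> (l k)\<bar>)" unfolding hr by (rule sum_abs)
  also have "\<dots> \<le> (\<Sum>k\<in>(UNIV::'n set). M)" using M l by (intro sum_mono) auto
  finally show ?thesis by simp
qed

lemma cmod_cquad_le:
  assumes "norm u = 1"
  shows "cmod (cquad Y u) \<le> (\<Sum>i\<in>UNIV. \<Sum>j\<in>UNIV. cmod (Y $ i $ j))"
proof -
  have u: "cmod (u $ i) \<le> 1" for i
    using Finite_Cartesian_Product.norm_nth_le[of u i] assms by simp
  have "cmod (cquad Y u) \<le> (\<Sum>i\<in>UNIV. cmod (\<Sum>j\<in>UNIV. cnj (u $ i) * Y $ i $ j * u $ j))"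
    unfolding cquad_def by (rule norm_sum)
  also have "\<dots> \<le> (\<Sum>i\<in>UNIV. \<Sum>j\<in>UNIV. cmod (cnj (u $ i) * Y $ i $ j * u $ j))"
    by (intro sum_mono norm_sum)
  also have "\<dots> \<le> (\<Sum>i\<in>UNIV. \<Sum>j\<in>UNIV. cmod (Y $ i $ j))"
  proof (intro sum_mono)
    fix i j
    have "cmod (cnj (u $ i) * Y $ i $ j * u $ j) = cmod (u $ i) * cmod (Y $ i $ j) * cmod (u $ j)"
      by (simp add: norm_mult)
    also have "\<dots> \<le> 1 * cmod (Y $ i $ j) * 1"
      using u by (intro mult_mono) auto
    finally show "cmod (cnj (u $ i) * Y $ i $ j * u $ j) \<le> cmod (Y $ i $ j)" by simp
  qed
  finally show ?thesis .
qed

lemma Re_ctrace_mult_spectraplex_le: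
  fixes X :: "complex^'n::finite^'n"
  assumes "X \<in> spectraplex"
  shows "Re (ctrace (Y ** X)) \<le> (\<Sum>i\<in>UNIV. \<Sum>j\<in>UNIV. cmod (Y $ i $ j))"
proof -
  define c where "c = (\<Sum>i\<in>UNIV. \<Sum>j\<in>UNIV. cmod (Y $ i $ j))"
  obtain U l where u: "unitary U" and X_eq: "X = U ** rdiag l ** cadj U"
     and l: "\<And>k. 0 \<le> l k \<and> l k \<le> 1" and l_sum: "(\<Sum>k\<in>UNIV. l k) = 1"
    using spectraplex_diagonalization[OF assms] by metis
  have "Re (ctrace (Y ** X)) = (\<Sum>k\<in>UNIV. l k * Re (cquad Y (column k U)))"
    by (simp add: X_eq ctrace_mult_diag_conj Re_sum)
  also have "\<dots> \<le> (\<Sum>k\<in>UNIV. l k * c)"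
  proof (intro sum_mono mult_left_mono)
    fix k
    have "norm (column k U) = 1"
      using unitary_cinner_columns[OF u, of k k] by (simp add: cinner_self_eq_1_iff)
    then show "Re (cquad Y (column k U)) \<le> c"
      unfolding c_def by (rule order_trans[OF complex_Re_le_cmod cmod_cquad_le])
  qed (use l in simp)
  also have "\<dots> = c" by (simp add: sum_distrib_right[symmetric] l_sum)
  finally show ?thesis by (simp add: c_def)
qed

lemma hconj_ge:
  fixes X :: "complex^'n::finite^'n"
  assumes "admissible_theta \<theta>" and X: "X \<in> spectraplex"
  shows "Re (ctrace (Y ** X)) - hreg \<theta> X \<le> hconj \<theta> Y"
proof -
  obtain M where M: "\<And>x. x \<in> {0..1} \<Longrightarrow> \<bar>\<theta> x\<bar> \<le> M"
    using admissible_theta_bounded[OF assms(1)] by metis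
  have "bdd_above ((\<lambda>X. Re (ctrace (Y ** X)) - hreg \<theta> X) ` spectraplex)"
  proof (rule bdd_aboveI2)
    fix X :: "complex^'n^'n" assume X: "X \<in> spectraplex"
    have "\<bar>hreg \<theta> X\<bar> \<le> real CARD('n) * M"
      using X M by (rule abs_hreg_le)
    with Re_ctrace_mult_spectraplex_le[OF X, of Y]
    show "Re (ctrace (Y ** X)) - hreg \<theta> X
        \<le> (\<Sum>i\<in>UNIV. \<Sum>j\<in>UNIV. cmod (Y $ i $ j)) + real CARD('n) * M"
      by linarith
  qed
  then show ?thesis unfolding hconj_def by (rule cSUP_upper[OF X])
qed

lemma hconj_diag_conj_ge_eigenvalue:
  fixes W :: "complex^'n::finite^'n"
  assumes "admissible_theta \<theta>" and M: "\<And>x. x \<in> {0..1} \<Longrightarrow> \<bar>\<theta> x\<bar> \<le> M" and u: "unitary W"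
  shows "l k - real CARD('n) * M \<le> hconj \<theta> (W ** rdiag l ** cadj W)"
proof -
  define w where "w = column k W"
  have w: "norm w = 1"
    using unitary_cinner_columns[OF u, of k k] by (simp add: w_def cinner_self_eq_1_iff)
  have "Re (ctrace ((W ** rdiag l ** cadj W) ** rank1 w)) = l k"
    unfolding ctrace_mult_rank1 w_def cquad_diag_conj_column[OF u] by simp
  moreover have "\<bar>hreg \<theta> (rank1 w)\<bar> \<le> real CARD('n) * M"
    using rank1_in_spectraplex[OF w] M by (rule abs_hreg_le)
  moreover note hconj_ge[OF assms(1) rank1_in_spectraplex[OF w], of "W ** rdiag l ** cadj W"]
  ultimately show ?thesis by linarith
qed

lemma pos_def_cquad_lower_bound:
  fixes P :: "complex^'n::finite^'n"
  assumes "pos_def P"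
  obtains c where "0 < c" "\<And>x. norm x = 1 \<Longrightarrow> c \<le> Re (cquad P x)"
proof -
  have "continuous_on (sphere 0 1) (\<lambda>x. inner x (P *v x))"
    by (intro continuous_on_inner continuous_on_id matrix_vector_mult_linear_continuous_on)
  moreover have "sphere (0::complex^'n) 1 \<noteq> {}" by simp
  ultimately obtain x0 where x0: "x0 \<in> sphere 0 1"
    and min: "\<And>x. x \<in> sphere 0 1 \<Longrightarrow> inner x0 (P *v x0) \<le> inner x (P *v x)"
    using continuous_attains_inf[OF compact_sphere] by blast
  have "x0 \<noteq> 0" using x0 by auto
  then have "0 < Re (cquad P x0)"
    using assms by (simp add: pos_def_def)
  with that show thesis using min by (simp add: Re_cquad)
qed

lemma unitary_columns_cquad_sum:
  fixes W :: "complex^'n::finite^'n"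
  shows "unitary W \<Longrightarrow> (\<Sum>k\<in>UNIV. cquad P (column k W)) = ctrace P"
proof -
  assume u: "unitary W"
  have "rdiag (\<lambda>_. 1) = (mat 1 :: complex^'n^'n)"
    by (simp add: rdiag_def mat_def vec_eq_iff)
  then have "W ** rdiag (\<lambda>_. 1) ** cadj W = mat 1"
    using u by (simp add: unitary_def)
  then show ?thesis
    using ctrace_mult_diag_conj[of P W "\<lambda>_. 1"] by simp
qed

lemma max_minus_weighted_mean_ge:
  fixes z p :: "'a \<Rightarrow> real"
  assumes "finite A" "sum p A = 1" "\<And>k. k \<in> A \<Longrightarrow> c \<le> p k" "sum z A = 0"
    "\<And>k. k \<in> A \<Longrightarrow> z k \<le> z j"
  shows "c * real (card A) * z j \<le> z j - (\<Sum>k\<in>A. z k * p k)"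
proof -
  have "c * real (card A) * z j = (\<Sum>k\<in>A. (z j - z k) * c)"
    using assms(4) by (simp add: left_diff_distrib sum_subtractf sum_distrib_right[symmetric])
  also have "\<dots> \<le> (\<Sum>k\<in>A. (z j - z k) * p k)"
    using assms(3,5) by (intro sum_mono mult_left_mono) auto
  also have "\<dots> = z j - (\<Sum>k\<in>A. z k * p k)"
    using assms(2) by (simp add: left_diff_distrib sum_subtractf sum_distrib_left[symmetric])
  finally show ?thesis .
qed

lemma zero_sum_abs_le:
  fixes z :: "'a \<Rightarrow> real"
  assumes "finite A" "sum z A = 0" "\<And>k. k \<in> A \<Longrightarrow> z k \<le> K" "j \<in> A"
  shows "\<bar>z j\<bar> \<le> real (card A) * K"
proof -
  have sum: "(\<Sum>k\<in>A. K - z k) = real (card A) * K"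
    using assms(2) by (simp add: sum_subtractf)
  have "K - z j \<le> real (card A) * K"
    unfolding sum[symmetric] using assms by (intro member_le_sum) auto
  moreover have "0 < card A"
    using assms(1,4) card_gt_0_iff by blast
  moreover have "0 \<le> real (card A) * K"
    unfolding sum[symmetric] using assms(3) by (intro sum_nonneg) auto
  ultimately have "0 \<le> K" "K \<le> real (card A) * K"
    by (simp_all add: zero_le_mult_iff mult_le_cancel_right1)
  with \<open>K - z j \<le> real (card A) * K\<close> assms(3,4) show ?thesis
    by (simp add: abs_le_iff) (smt (verit) mult_nonneg_nonneg)
qed

lemma traceless_max_eigenvalue_le_fenchel:
  fixes P W :: "complex^'n::finite^'n"
  assumes adm: "admissible_theta \<theta>" and M: "\<And>x. x \<in> {0..1} \<Longrightarrow> \<bar>\<theta> x\<bar> \<le> M"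
    and P: "P \<in> spectraplex" and c: "\<And>x. norm x = 1 \<Longrightarrow> c \<le> Re (cquad P x)"
    and u: "unitary W" and z: "sum z UNIV = 0" "\<And>k. z k \<le> z j"
  shows "c * real CARD('n) * z j
    \<le> fenchel \<theta> P (W ** rdiag z ** cadj W) - hreg \<theta> P + real CARD('n) * M"
proof -
  define p where "p k = Re (cquad P (column k W))" for k
  have "sum p UNIV = 1"
    using unitary_columns_cquad_sum[OF u, of P] P by (simp add: p_def spectraplex_def flip: Re_sum)
  moreover have "c \<le> p k" for k
    using c unitary_cinner_columns[OF u, of k k] by (simp add: p_def cinner_self_eq_1_iff)
  ultimately have "c * real CARD('n) * z j \<le> z j - (\<Sum>k\<in>UNIV. z k * p k)"
    using z by (intro max_minus_weighted_mean_ge) auto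
  moreover have "Re (ctrace (P ** (W ** rdiag z ** cadj W))) = (\<Sum>k\<in>UNIV. z k * p k)"
    by (simp add: ctrace_mult_diag_conj Re_sum p_def)
  moreover note hconj_diag_conj_ge_eigenvalue[OF adm M u, of z j]
  ultimately show ?thesis
    by (simp add: fenchel_def)
qed

lemma traceless_eigenvalue_bound:
  fixes P Z :: "complex^'n::finite^'n"
  assumes adm: "admissible_theta \<theta>" and M: "\<And>x. x \<in> {0..1} \<Longrightarrow> \<bar>\<theta> x\<bar> \<le> M"
    and P: "P \<in> spectraplex" and c: "0 < c" "\<And>x. norm x = 1 \<Longrightarrow> c \<le> Re (cquad P x)"
    and Z: "hermitian Z" "ctrace Z = 0" and ev: "Z *v v = \<mu> *s v" "v \<noteq> 0"
  shows "cmod \<mu> \<le> (fenchel \<theta> P Z - hreg \<theta> P + real CARD('n) * M) / c"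
proof -
  obtain W :: "complex^'n^'n" and z where u: "unitary W" and Z_eq: "Z = W ** rdiag z ** cadj W"
    using hermitian_unitary_diagonalization[OF Z(1)] by blast
  obtain j where \<mu>: "\<mu> = of_real (z j)"
    using eigenvalue_diag_conj[OF u] ev Z_eq by metis
  have "of_real (sum z UNIV) = (0::complex)"
    using Z(2) ctrace_diag_conj[OF u, of z] by (simp add: Z_eq)
  then have z_sum: "sum z UNIV = 0" by (simp only: of_real_eq_0_iff)
  have "Max (range z) \<in> range z" by (rule Max_in) auto
  then obtain jmax where "z jmax = Max (range z)" by (metis rangeE)
  then have jmax: "z k \<le> z jmax" for k by simp
  have "c * (real CARD('n) * z jmax) \<le> fenchel \<theta> P Z - hreg \<theta> P + real CARD('n) * M"
    using traceless_max_eigenvalue_le_fenchel[OF adm M P c(2) u z_sum jmax] by (simp add: Z_eq ac_simps)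
  then have "real CARD('n) * z jmax \<le> (fenchel \<theta> P Z - hreg \<theta> P + real CARD('n) * M) / c"
    using c(1) by (simp add: pos_le_divide_eq mult.commute)
  moreover have "\<bar>z j\<bar> \<le> real CARD('n) * z jmax"
    using zero_sum_abs_le[of UNIV z] z_sum jmax by simp
  ultimately show ?thesis by (simp add: \<mu>)
qed

theorem lemmaE2:
  fixes \<theta> :: "real \<Rightarrow> real" and P :: "complex^'n::finite^'n" and Z :: "nat \<Rightarrow> complex^'n^'n"
  assumes "admissible_theta \<theta>"
    and "P \<in> spectraplex" and "pos_def P"
    and "\<And>n. n \<ge> 1 \<Longrightarrow> hermitian (Z n) \<and> ctrace (Z n) = 0"
    and "\<And>n m. n \<ge> 1 \<Longrightarrow> m \<ge> 1 \<Longrightarrow> fenchel \<theta> P (Z n) = fenchel \<theta> P (Z m)"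
  shows "\<exists>B::real. \<forall>n\<ge>1. \<forall>(z::complex) v. v \<noteq> 0 \<and> Z n *v v = z *s v \<longrightarrow> cmod z \<le> B"
proof -
  obtain M where M: "\<And>x. x \<in> {0..1} \<Longrightarrow> \<bar>\<theta> x\<bar> \<le> M"
    using admissible_theta_bounded[OF assms(1)] by metis
  obtain c where c: "0 < c" "\<And>x. norm x = 1 \<Longrightarrow> c \<le> Re (cquad P x)"
    using pos_def_cquad_lower_bound[OF assms(3)] by metis
  have "cmod \<mu> \<le> (fenchel \<theta> P (Z 1) - hreg \<theta> P + real CARD('n) * M) / c"
    if "n \<ge> 1" "v \<noteq> 0" "Z n *v v = \<mu> *s v" for n v \<mu>
    using traceless_eigenvalue_bound[where Z = "Z n", OF assms(1) M assms(2) c] assms(4)[of n] assms(5)[of n 1] that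
    by simp
  then show ?thesis by blast
qed

end
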